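(* Let $N\ge 64$ be an integer and let $\mathbb{D}_{0.95}$ be the disk of radius $0.95$ centered at the origin. Then for all $x\in\mathbb{D}_{0.95}$ and $l=1,2,3,4$, \[ \left|\frac{V_l\left(f_N^{-1}(x)^N\right)c_N}{f_N'(f_N^{-1}(x))\,f_N^{-1}(x)}\right|\le C_{V,l}, \] with $C_{V,1} = 0.1$, $C_{V,2} = 0.05$, $C_{V,3}=0.08$, $C_{V,4}=1$.
   Context: Let $\lambda = j_{0,1}^2$ ($j_{0,1}$ the first positive zero of $J_0$) and $\zeta$ the Riemann zeta function. Let $c_N = \sqrt{\Gamma(1-\frac1N)^2\Gamma(1+\frac2N)/(\Gamma(1+\frac1N)^2\Gamma(1-\frac2N))}$ and let $f_N(z) = c_N\int_0^z (1-\zeta^N)^{-2/N}d\zeta$ be the Schwarz–Christoffel map, a biholomorphism of the unit disk onto the regular $N$-gon $\mathcal{P}_N$ of area $\pi$ centered at the origin, with inverse $f_N^{-1}$. For positive integers $m_1,\dots,m_k$ and $|z|<1$ the multiple polylogarithm is $\mathrm{Li}_{m_1,\dots,m_k}(z) = \sum_{0<n_1<\dots<n_k} \frac{z^{n_k}}{n_1^{m_1}\cdots n_k^{m_k}}$ (so $\mathrm{Li}_s$ is the ordinary polylogarithm). Define $V_1 = 2\mathrm{Li}_1$, $V_2 = (\frac{\lambda}{2}-2)\mathrm{Li}_2+4\mathrm{Li}_{1,1}$, $V_3 = (\frac{\lambda^2}{16}-\lambda+2)\mathrm{Li}_3+(3\lambda-12)\mathrm{Li}_{1,2}+(\lambda-4)\mathrm{Li}_{2,1}+8\mathrm{Li}_{1,1,1}$,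 $V_4 = (\frac{\lambda^3}{192}-\frac{\lambda^2}{8}-\frac{\lambda}{2}-2)\mathrm{Li}_4+(\frac{\lambda^2}{8}-2\lambda+4)\mathrm{Li}_{3,1}+(\frac{\lambda^2}{4}-4\lambda+12)\mathrm{Li}_{2,2}+(\frac{5\lambda^2}{8}-8\lambda+28)\mathrm{Li}_{1,3}+(2\lambda-8)\mathrm{Li}_{2,1,1}+(6\lambda-24)\mathrm{Li}_{1,2,1}+(14\lambda-56)\mathrm{Li}_{1,1,2}+16\mathrm{Li}_{1,1,1,1}+2\lambda\zeta(3)\mathrm{Li}_1$. At $x=0$ (where $f_N^{-1}(0)=0$) the quotient is understood as its continuous extension. *)

theory Defs
  imports "HOL-Complex_Analysis.Complex_Analysis"
begin

definition besselJ0 :: "real \<Rightarrow> real" where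
  "besselJ0 x = (\<Sum>k. (-1)^k / (fact k)^2 * (x/2)^(2*k))"

definition j01 :: real where
  "j01 = Inf {x. x > 0 \<and> besselJ0 x = 0}"

definition lam :: real where
  "lam = j01^2"

definition zeta3 :: real where
  "zeta3 = (\<Sum>n. 1 / (real (Suc n))^3)"

definition cN :: "nat \<Rightarrow> real" where
  "cN N = sqrt (Gamma (1 - 1/real N)^2 * Gamma (1 + 2/real N)
              / (Gamma (1 + 1/real N)^2 * Gamma (1 - 2/real N)))"

definition fN :: "nat \<Rightarrow> complex \<Rightarrow> complex" where
  "fN N z = complex_of_real (cN N) *
     contour_integral (linepath 0 z) (\<lambda>w. (1 - w^N) powr (- (2 / of_nat N :: complex)))"

definition fN_inv :: "nat \<Rightarrow> complex \<Rightarrow> complex" where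
  "fN_inv N = inv_into (ball 0 1) (fN N)"

text \<open>Nested harmonic sums. H [m_{k-1}, ..., m_1] n =
  sum over 0 < n_1 < ... < n_{k-1} < n of 1/(n_1^m_1 ... n_{k-1}^m_{k-1}) (list given in reverse order).\<close>
fun Hs :: "nat list \<Rightarrow> nat \<Rightarrow> complex" where
  "Hs [] n = 1"
| "Hs (m # ms) n = (\<Sum>j\<in>{1..<n}. Hs ms j / of_nat j ^ m)"

text \<open>Multiple polylogarithm Li_{m_1,...,m_k}(z), list [m_1,...,m_k].\<close>
definition mpolylog :: "nat list \<Rightarrow> complex \<Rightarrow> complex" where
  "mpolylog ms z = (case rev ms of
      [] \<Rightarrow> 0
    | (m # rs) \<Rightarrow> (\<Sum>n. (if n = 0 then 0 else Hs rs n * z^n / of_nat n ^ m)))"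

definition V :: "nat \<Rightarrow> complex \<Rightarrow> complex" where
  "V l z = (let L = complex_of_real lam; Li = (\<lambda>ms. mpolylog ms z) in
     if l = 1 then 2 * Li [1]
     else if l = 2 then (L/2 - 2) * Li [2] + 4 * Li [1,1]
     else if l = 3 then (L^2/16 - L + 2) * Li [3] + (3*L - 12) * Li [1,2]
                        + (L - 4) * Li [2,1] + 8 * Li [1,1,1]
     else if l = 4 then (L^3/192 - L^2/8 - L/2 - 2) * Li [4] + (L^2/8 - 2*L + 4) * Li [3,1]
                        + (L^2/4 - 4*L + 12) * Li [2,2] + (5*L^2/8 - 8*L + 28) * Li [1,3]
                        + (2*L - 8) * Li [2,1,1] + (6*L - 24) * Li [1,2,1]
                        + (14*L - 56) * Li [1,1,2] + 16 * Li [1,1,1,1]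
                        + 2 * L * complex_of_real zeta3 * Li [1]
     else 0)"

definition CV :: "nat \<Rightarrow> real" where
  "CV l = (if l = 1 then 0.1 else if l = 2 then 0.05 else if l = 3 then 0.08 else 1)"

definition Qt :: "nat \<Rightarrow> nat \<Rightarrow> complex \<Rightarrow> complex" where
  "Qt N l x = (let w = fN_inv N x in
     V l (w ^ N) * complex_of_real (cN N) / (deriv (fN N) w * w))"

end

theory Submission
  imports Defs
begin

text \<open>
  Put \<open>w = f\<^sub>N\<^sup>-\<^sup>1(x)\<close> and \<open>z = w\<^sup>N\<close>. Since \<open>f\<^sub>N'(w) = c\<^sub>N (1 - z)\<^sup>-\<^sup>2\<^sup>/\<^sup>N\<close>, the quotient
  equals \<open>V\<^sub>l(z) / ((1 - z)\<^sup>-\<^sup>2\<^sup>/\<^sup>N w)\<close>. For \<open>N \<ge> 64\<close> the integrand \<open>(1 - \<zeta>\<^sup>N)\<^sup>-\<^sup>2\<^sup>/\<^sup>N\<close>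
  is within \<open>O(|\<zeta>|\<^sup>N/N)\<close> of 1 and \<open>c\<^sub>N \<ge> 0.9993\<close>, so \<open>f\<^sub>N\<close> is almost the identity:
  \<open>|f\<^sub>N(w)| \<ge> 0.9987 |w|\<close>, and by Brouwer's fixed point theorem \<open>f\<^sub>N\<close> covers the disk of
  radius 0.95. Hence \<open>|w| \<le> 0.9512\<close> and \<open>|z| \<le> 0.9512\<^sup>6\<^sup>4 < 0.0408\<close>. Each \<open>V\<^sub>l\<close> vanishes at 0,
  and since the nested harmonic sums grow at most like \<open>3\<^sup>n\<close>, its power series gives
  \<open>|V\<^sub>l(z)| \<le> K\<^sub>l |z|\<close> on that disk, using the bounds \<open>2.12 \<le> j\<^sub>0\<^sub>,\<^sub>1 \<le> 2.41\<close> (from the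
  alternating series of \<open>J\<^sub>0\<close>) and \<open>\<zeta>(3) \<le> \<pi>\<^sup>2/6\<close>. Altogether the quotient is at most
  \<open>1.0026 K\<^sub>l |w|\<^sup>N\<^sup>-\<^sup>1\<close>, which is at most \<open>C\<^sub>V\<^sub>,\<^sub>l\<close> and tends to 0 as \<open>x \<rightarrow> 0\<close>.
\<close>

section \<open>Numerical bounds on \<open>\<lambda>\<close> and \<open>\<zeta>(3)\<close>\<close>

definition besselJ0_series :: "real \<Rightarrow> real" where
  "besselJ0_series y = (\<Sum>k. (-1)^k / (fact k)^2 * y^k)"

lemma besselJ0_eq_series: "besselJ0 x = besselJ0_series (x^2/4)"
  unfolding besselJ0_def besselJ0_series_def by (simp add: power_mult power_divide)

lemma summable_besselJ0_series_abs: "summable (\<lambda>k. \<bar>y\<bar>^k / (fact k)^2 :: real)"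
proof (rule summable_comparison_test'[OF summable_exp[of "\<bar>y\<bar>"]])
  fix n :: nat
  have "\<bar>y\<bar>^n / (fact n)^2 \<le> \<bar>y\<bar>^n / fact n"
    by (rule divide_left_mono) (auto simp: power2_eq_square)
  then show "norm (\<bar>y\<bar>^n / (fact n)^2) \<le> inverse (fact n) * \<bar>y\<bar>^n"
    by (simp add: divide_inverse mult.commute)
qed

lemma summable_besselJ0_series: "summable (\<lambda>k. (-1)^k / (fact k)^2 * y^k :: real)"
  by (rule summable_norm_cancel)
    (use summable_besselJ0_series_abs[of y] in \<open>simp add: abs_mult power_abs\<close>)

lemma besselJ0_series_bounds:
  fixes y :: real
  assumes "0 \<le> y" and "y \<le> 4"
  shows "1 - y + y^2/4 - y^3/36 \<le> besselJ0_series y"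
    and "besselJ0_series y \<le> 1 - y + y^2/4 - y^3/36 + y^4/576"
proof -
  define a where "a k = y^(Suc k) / (fact (Suc k))^2" for k
  have "(\<lambda>k. (-1)^k / (fact k)^2 * y^k) sums besselJ0_series y"
    unfolding besselJ0_series_def by (rule summable_sums[OF summable_besselJ0_series])
  then have "(\<lambda>k. - ((-1)^k * a k)) sums (besselJ0_series y - 1)"
    using sums_Suc_iff[of "\<lambda>k. (-1)^k / (fact k)^2 * y^k" "besselJ0_series y - 1"]
    by (simp add: a_def)
  then have series: "besselJ0_series y = 1 - (\<Sum>k. (-1)^k * a k)"
    using sums_unique[OF sums_minus] by fastforce
  have a_nonneg: "0 \<le> a k" for k
    unfolding a_def using assms by simp
  have "summable (\<lambda>k. \<bar>y\<bar>^Suc k / (fact (Suc k))^2)"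
    by (subst summable_Suc_iff) (rule summable_besselJ0_series_abs)
  then have "summable a"
    unfolding a_def using assms by simp
  then have a_lim: "a \<longlonglongrightarrow> 0"
    by (rule summable_LIMSEQ_zero)
  \<comment> \<open>The ratio of consecutive terms is \<open>y / (k+2)^2 \<le> 1\<close>; this is where \<open>y \<le> 4\<close> enters.\<close>
  have a_decr: "a (Suc k) \<le> a k" for k
  proof -
    have "y \<le> (real (Suc (Suc k)))^2"
      using assms power_mono[of 2 "real (Suc (Suc k))" 2] by simp
    then have ratio: "y / (real (Suc (Suc k)))^2 \<le> 1"
      by (simp add: divide_le_eq_1)
    have "a (Suc k) = (y / (real (Suc (Suc k)))^2) * a k"
      by (simp add: a_def field_simps power2_eq_square)
    then show ?thesis
      using mult_right_mono[OF ratio a_nonneg[of k]] by simp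
  qed
  note Leibniz = summable_Leibniz'[OF a_lim a_nonneg a_decr]
  have "(\<Sum>i<2*2. (-1)^i*a i) \<le> (\<Sum>i. (-1)^i*a i)" "(\<Sum>i. (-1)^i*a i) \<le> (\<Sum>i<2*1+1. (-1)^i*a i)"
    by (rule Leibniz(2), rule Leibniz(4))
  moreover have "(\<Sum>i<2*1+1. (-1)^i*a i) = y - y^2/4 + y^3/36"
    and "(\<Sum>i<2*2. (-1)^i*a i) = y - y^2/4 + y^3/36 - y^4/576"
    by (simp_all add: a_def eval_nat_numeral fact_numeral)
  ultimately show "1 - y + y^2/4 - y^3/36 \<le> besselJ0_series y"
    and "besselJ0_series y \<le> 1 - y + y^2/4 - y^3/36 + y^4/576"
    unfolding series by linarith+
qed

lemma continuous_on_besselJ0: "continuous_on S besselJ0"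
proof -
  have cont: "isCont besselJ0_series y" for y
    unfolding besselJ0_series_def
    by (rule isCont_powser[of _ "\<bar>y\<bar> + 1"]) (use summable_besselJ0_series in \<open>auto simp: mult.assoc\<close>)
  have eq: "besselJ0 = besselJ0_series \<circ> (\<lambda>x. x^2/4)"
    by (auto simp: besselJ0_eq_series fun_eq_iff)
  show ?thesis
    unfolding eq by (intro continuous_at_imp_continuous_on ballI continuous_at_compose cont continuous_intros) simp
qed

lemma besselJ0_pos:
  assumes "0 \<le> x" and "x \<le> 2.12"
  shows "0 < besselJ0 x"
proof -
  define y where "y = x^2/4"
  have y: "0 \<le> y" "y \<le> 1.1236"
    using power_mono[OF assms(2) assms(1), of 2] unfolding y_def by (auto simp: power_divide)
  \<comment> \<open>\<open>1 - y + y\<^sup>2/4 = (1 - y/2)\<^sup>2\<close>\<close>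
  have "0.4382^2 \<le> (1 - y/2)^2" and "y^3 \<le> 1.1236^3"
    using y by (auto intro!: power_mono)
  then have "0 < 1 - y + y^2/4 - y^3/36"
    by (simp add: power2_eq_square power3_eq_cube algebra_simps)
  also have "\<dots> \<le> besselJ0 x"
    using besselJ0_series_bounds(1)[of y] y by (simp add: besselJ0_eq_series y_def)
  finally show ?thesis .
qed

lemma besselJ0_neg: "besselJ0 2.41 < 0"
proof -
  have "besselJ0 2.41 = besselJ0_series 1.452025"
    by (simp add: besselJ0_eq_series power2_eq_square)
  also have "\<dots> \<le> 1 - 1.452025 + 1.452025^2/4 - 1.452025^3/36 + 1.452025^4/576"
    by (rule besselJ0_series_bounds(2)) simp_all
  also have "\<dots> < 0"
    by (simp add: power_divide)
  finally show ?thesis .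
qed

lemma j01_bounds: "2.12 \<le> j01" "j01 \<le> 2.41"
proof -
  define S where "S = {x. x > 0 \<and> besselJ0 x = 0}"
  have "besselJ0 0 = 1"
    using powser_zero[of "\<lambda>k. (-1)^k / (fact k)^2 :: real"]
    by (simp add: besselJ0_eq_series besselJ0_series_def)
  then obtain z where z: "0 \<le> z" "z \<le> 2.41" "besselJ0 z = 0"
    using IVT2'[of besselJ0 "2.41" 0 0] besselJ0_neg continuous_on_besselJ0 by force
  then have "z \<in> S"
    unfolding S_def using besselJ0_pos[of z] by (cases "z \<le> 2.12") auto
  moreover have "bdd_below S"
    unfolding S_def by (rule bdd_belowI[of _ 0]) auto
  ultimately have "j01 \<le> z"
    unfolding j01_def S_def[symmetric] by (rule cInf_lower)
  then show "j01 \<le> 2.41"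
    using z by simp
  have "2.12 \<le> Inf S"
  proof (rule cInf_greatest)
    show "S \<noteq> {}"
      using \<open>z \<in> S\<close> by blast
    show "2.12 \<le> x" if "x \<in> S" for x
      using that besselJ0_pos[of x] unfolding S_def by force
  qed
  then show "2.12 \<le> j01"
    unfolding j01_def S_def .
qed

lemma lam_bounds: "4.4944 \<le> lam" "lam \<le> 5.8081"
  using power_mono[OF j01_bounds(1), of 2] power_mono[OF j01_bounds(2), of 2] j01_bounds
  by (simp_all add: lam_def power2_eq_square)

lemma zeta3_bounds: "0 \<le> zeta3" "zeta3 \<le> 1.65"
proof -
  have squares: "(\<lambda>n. 1 / (real (Suc n))^2) sums (pi^2/6)"
    using inverse_squares_sums by (simp add: add.commute)
  have le: "1 / (real (Suc n))^3 \<le> 1 / (real (Suc n))^2" for n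
    by (intro divide_left_mono power_increasing) auto
  have summable: "summable (\<lambda>n. 1 / (real (Suc n))^3)"
    by (rule summable_comparison_test'[OF sums_summable[OF squares]]) (use le in simp)
  show "0 \<le> zeta3"
    unfolding zeta3_def by (rule suminf_nonneg[OF summable]) simp
  have "zeta3 \<le> pi^2/6"
    unfolding zeta3_def using suminf_le[OF le summable sums_summable[OF squares]] sums_unique[OF squares]
    by simp
  also have "\<dots> \<le> 1.65"
    using power_mono[OF pi_approx(2), of 2] by (simp add: power2_eq_square)
  finally show "zeta3 \<le> 1.65" .
qed

section \<open>The constant \<open>c\<^sub>N\<close>\<close>

lemma Gamma_reflection_real: "Gamma x * Gamma (1 - x) = pi / sin (pi * x)"
proof -
  have "complex_of_real (Gamma x * Gamma (1 - x)) = of_real (pi / sin (pi * x))"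
    using Gamma_reflection_complex[of "of_real x"]
    by (simp add: Gamma_complex_of_real[symmetric] sin_of_real[symmetric])
  then show ?thesis
    by (simp only: of_real_eq_iff)
qed

lemma Gamma_one_minus:
  fixes e :: real
  assumes "0 < e" and "e < 1"
  shows "Gamma (1 - e) = pi * e / (sin (pi * e) * Gamma (1 + e))"
proof -
  have "e \<notin> \<int>\<^sub>\<le>\<^sub>0"
    using assms nonpos_Ints_nonpos by force
  then have "Gamma (1 + e) = e * Gamma e"
    using Gamma_plus1[of e] by (simp add: add.commute)
  moreover have "sin (pi * e) \<noteq> 0"
    using assms sin_gt_zero[of "pi * e"] by auto
  moreover have "Gamma e \<noteq> 0"
    using Gamma_real_pos[OF assms(1)] by linarith
  ultimately show ?thesis
    using Gamma_reflection_real[of e] assms by (simp add: field_simps)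
qed

lemma Gamma_midpoint_squared_le:
  fixes x y :: real
  assumes "0 < x" and "0 < y"
  shows "Gamma ((x + y) / 2)^2 \<le> Gamma x * Gamma y"
proof -
  have pos: "0 < Gamma x" "0 < Gamma y" "0 < Gamma ((x + y) / 2)"
    using assms by simp_all
  have "ln (Gamma ((1 - 1/2) *\<^sub>R x + (1/2) *\<^sub>R y)) \<le> (1 - 1/2) * ln (Gamma x) + (1/2) * ln (Gamma y)"
    using convex_onD[OF log_convex_Gamma_real, of "1/2" x y] assms by simp
  then have "2 * ln (Gamma ((x + y) / 2)) \<le> ln (Gamma x * Gamma y)"
    using pos by (simp add: ln_mult add_divide_distrib)
  then have "ln (Gamma ((x + y) / 2)^2) \<le> ln (Gamma x * Gamma y)"
    using pos by (simp add: ln_realpow)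
  then show ?thesis
    using pos by simp
qed

lemma cos_ge_one_minus_square_half: "1 - t^2/2 \<le> cos (t::real)"
proof -
  have "cos t = 1 - 2 * sin (t/2)^2"
    using cos_double_sin[of "t/2"] by simp
  moreover have "sin (t/2)^2 \<le> (t/2)^2"
    using abs_sin_x_le_abs_x[of "t/2"] by (metis abs_le_square_iff)
  ultimately show ?thesis
    by (simp add: power_divide)
qed

lemma cN_squared:
  assumes "N > 2"
  shows "(cN N)^2 = Gamma (1 - 1/N)^2 * Gamma (1 + 2/N) / (Gamma (1 + 1/N)^2 * Gamma (1 - 2/N))"
    and "0 < cN N"
proof -
  have "0 < 1 - 1 / real N" "0 < 1 - 2 / real N"
    using assms by (auto simp: field_simps)
  then have "0 < Gamma (1 - 1/N)" "0 < Gamma (1 - 2/N)" "0 < Gamma (1 + 1/N)" "0 < Gamma (1 + 2/N)"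
    by (simp_all add: add_pos_nonneg)
  then show "(cN N)^2 = Gamma (1 - 1/N)^2 * Gamma (1 + 2/N) / (Gamma (1 + 1/N)^2 * Gamma (1 - 2/N))"
    and "0 < cN N"
    unfolding cN_def by simp_all
qed

\<comment> \<open>By the reflection formula, \<open>c\<^sub>N\<^sup>2 = (\<pi>/N) cot(\<pi>/N) \<cdot> \<Gamma>(1+2/N)\<^sup>2 / \<Gamma>(1+1/N)\<^sup>4\<close>,
  and log-convexity of \<open>\<Gamma>\<close> makes the second factor at least 1.\<close>
lemma cos_le_cN_squared:
  assumes "N > 2"
  shows "cos (pi / N) \<le> (cN N)^2"
proof -
  define e where "e = 1 / real N"
  have e: "0 < e" "2 * e < 1"
    using assms unfolding e_def by (auto simp: field_simps)
  define A where "A = Gamma (1 + e)"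
  define B where "B = Gamma (1 + 2 * e)"
  have A: "A > 0" and B: "B > 0"
    unfolding A_def B_def using e by auto
  have s: "sin (pi * e) > 0"
    using e by (intro sin_gt_zero) auto
  have "0 \<le> pi * e" "pi * e \<le> pi / 2"
    using e by auto
  then have c: "cos (pi * e) \<ge> 0"
    by (intro cos_ge_zero) linarith+
  have "A^2 \<le> B"
    using Gamma_midpoint_squared_le[of 1 "1 + 2 * e"] e unfolding A_def B_def by (simp add: add_divide_distrib)
  then have AB: "1 \<le> B^2 / A^4"
    using A power_mono[of "A^2" B 2] by (simp add: field_simps flip: power_mult)
  have "(cN N)^2 = Gamma (1 - e)^2 * B / (A^2 * Gamma (1 - 2 * e))"
    using cN_squared(1)[OF assms] unfolding A_def B_def e_def by simp
  also have "\<dots> = pi * e * cos (pi * e) / sin (pi * e) * (B^2 / A^4)"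
  proof -
    have G1: "Gamma (1 - e) = pi * e / (sin (pi * e) * A)"
      and G2: "Gamma (1 - 2 * e) = pi * (2 * e) / (sin (pi * (2 * e)) * B)"
      using e Gamma_one_minus[of e] Gamma_one_minus[of "2 * e"] unfolding A_def B_def by simp_all
    have sin2: "sin (pi * (2 * e)) = 2 * sin (pi * e) * cos (pi * e)"
      using sin_double[of "pi * e"] by (simp add: ac_simps)
    show ?thesis
      unfolding G1 G2 sin2 using A B s e by (simp add: field_simps power2_eq_square power4_eq_xxxx)
  qed
  finally have cN_sq: "(cN N)^2 = pi * e * cos (pi * e) / sin (pi * e) * (B^2 / A^4)" .
  have "cos (pi * e) \<le> pi * e * cos (pi * e) / sin (pi * e)"
    using mult_left_mono[OF sin_x_le_x[of "pi * e"] c] e s by (simp add: field_simps)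
  also have "\<dots> \<le> (cN N)^2"
    unfolding cN_sq using mult_left_mono[OF AB, of "pi * e * cos (pi * e) / sin (pi * e)"] c s e by simp
  finally show ?thesis
    by (simp add: e_def)
qed

lemma cN_ge:
  assumes "N \<ge> 64"
  shows "0.9993 \<le> cN N"
proof -
  have "(pi / N)^2 \<le> (3.2 / 64)^2"
    using assms pi_approx by (intro power_mono frac_le) auto
  then have "0.99875 \<le> cos (pi / N)"
    using cos_ge_one_minus_square_half[of "pi / N"] by (simp add: power_divide)
  also have "\<dots> \<le> (cN N)^2"
    using assms by (intro cos_le_cN_squared) simp
  finally have "0.9993^2 \<le> (cN N)^2"
    by (simp add: power2_eq_square)
  then show ?thesis
    using power2_le_imp_le[of "0.9993" "cN N"] cN_squared(2)[of N] assms by simp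
qed

section \<open>The Schwarz--Christoffel map near the identity\<close>

definition sc_integrand :: "nat \<Rightarrow> complex \<Rightarrow> complex" where
  "sc_integrand N w = (1 - w^N) powr (- (2 / of_nat N :: complex))"

lemma fN_eq: "fN N z = complex_of_real (cN N) * contour_integral (linepath 0 z) (sc_integrand N)"
  unfolding fN_def sc_integrand_def[abs_def] ..

lemma sc_integrand_eq: "sc_integrand N w = (1 - w^N) powr (- complex_of_real (2 / real N))"
  by (simp add: sc_integrand_def)

lemma holomorphic_sc_integrand:
  assumes "N > 0"
  shows "sc_integrand N holomorphic_on ball 0 1"
  unfolding sc_integrand_def[abs_def]
proof (rule holomorphic_on_powr)
  fix w :: complex
  assume "w \<in> ball 0 1"
  then have "norm (w^N) < 1"
    using assms by (simp add: norm_power power_less_one_iff)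
  then have "0 < Re (1 - w^N)"
    using complex_Re_le_cmod[of "w^N"] by simp
  then show "1 - w^N \<notin> \<real>\<^sub>\<le>\<^sub>0"
    by (simp add: complex_nonpos_Reals_iff)
qed (auto intro!: holomorphic_intros)

lemma closed_segment_0_subset_ball: "w \<in> ball 0 r \<Longrightarrow> closed_segment 0 w \<subseteq> ball (0::complex) r"
  using convex_ball[of 0 r] le_less_trans[OF norm_ge_zero[of w]] by (intro closed_segment_subset) auto

lemma has_contour_integral_sc_integrand:
  assumes "N > 0" and "w \<in> ball 0 1"
  shows "(sc_integrand N has_contour_integral contour_integral (linepath 0 w) (sc_integrand N)) (linepath 0 w)"
proof -
  have "continuous_on (closed_segment 0 w) (sc_integrand N)"
    using holomorphic_on_imp_continuous_on[OF holomorphic_sc_integrand[OF assms(1)]]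
      closed_segment_0_subset_ball[OF assms(2)] continuous_on_subset by blast
  then show ?thesis
    by (intro has_contour_integral_integral contour_integrable_continuous_linepath)
qed

lemma fN_has_field_derivative:
  assumes "N > 0" and w: "w \<in> ball 0 1"
  shows "(fN N has_field_derivative (complex_of_real (cN N) * sc_integrand N w)) (at w)"
proof -
  note hol = holomorphic_sc_integrand[OF assms(1)]
  have "((\<lambda>z. contour_integral (linepath 0 z) (sc_integrand N)) has_field_derivative sc_integrand N w) (at w)"
  proof (rule triangle_contour_integrals_starlike_primitive[OF holomorphic_on_imp_continuous_on[OF hol]])
    show "closed_segment 0 z \<subseteq> ball 0 1" if "z \<in> ball 0 1" for z :: complex
      using that by (rule closed_segment_0_subset_ball)
    fix b c
    assume "closed_segment b c \<subseteq> ball (0::complex) 1"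
    then have "convex hull {0, b, c} \<subseteq> ball 0 1"
      by (intro hull_minimal) auto
    then have "(sc_integrand N has_contour_integral 0) (linepath 0 b +++ linepath b c +++ linepath c 0)"
      by (intro Cauchy_theorem_triangle holomorphic_on_subset[OF hol])
    then show "contour_integral (linepath 0 b) (sc_integrand N) + contour_integral (linepath b c) (sc_integrand N)
        + contour_integral (linepath c 0) (sc_integrand N) = 0"
      by (rule has_chain_integral_chain_integral3)
  qed (use w in auto)
  then show ?thesis
    unfolding fN_eq[abs_def] by (rule DERIV_cmult)
qed

lemma deriv_fN:
  assumes "N > 0" and "w \<in> ball 0 1"
  shows "deriv (fN N) w = complex_of_real (cN N) * sc_integrand N w"
  by (rule DERIV_imp_deriv[OF fN_has_field_derivative[OF assms]])

lemma continuous_on_fN: "N > 0 \<Longrightarrow> continuous_on (ball 0 1) (fN N)"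
  by (intro continuous_at_imp_continuous_on ballI DERIV_isCont[OF fN_has_field_derivative])

lemma fN_0 [simp]: "fN N 0 = 0"
  unfolding fN_def by simp

lemma one_minus_powr_eq_exp:
  "norm (u::complex) < 1 \<Longrightarrow> (1 - u) powr (- complex_of_real a) = exp (- complex_of_real a * Ln (1 - u))"
  by (auto simp: powr_def)

lemma abs_Im_Ln_one_minus_le:
  assumes "norm (u::complex) < 1"
  shows "\<bar>Im (Ln (1 - u))\<bar> \<le> pi * norm u"
proof (cases "norm u < 1/2")
  case True
  have "\<bar>Im (Ln (1 - u))\<bar> \<le> norm (Ln (1 + (- u)))"
    by (simp add: abs_Im_le_cmod)
  also have "\<dots> \<le> 2 * norm u"
    using norm_Ln_le[of "- u"] True by simp
  also have "\<dots> \<le> pi * norm u"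
    using pi_gt3 by (intro mult_right_mono) auto
  finally show ?thesis .
next
  case False
  have "0 < Re (1 - u)"
    using complex_Re_le_cmod[of u] assms by simp
  then have "\<bar>Im (Ln (1 - u))\<bar> < pi / 2"
    by (rule Re_Ln_pos_lt_imp)
  also have "pi / 2 \<le> pi * norm u"
    using False by simp
  finally show ?thesis
    by simp
qed

lemma ln_norm_one_minus_le:
  assumes "norm (u::complex) < 1"
  shows "ln (norm (1 - u)) \<le> norm u"
proof -
  have "0 < norm (1 - u)" "0 < 1 + norm u"
    using assms norm_ge_zero[of u] by (auto, linarith)
  then have "ln (norm (1 - u)) \<le> ln (1 + norm u)"
    using norm_triangle_ineq4[of 1 u] by simp
  also have "\<dots> \<le> norm u"
    by (rule ln_add_one_self_le_self) simp
  finally show ?thesis .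
qed

lemma norm_one_minus_powr_ge:
  assumes "0 \<le> a" and "norm (u::complex) < 1"
  shows "exp (- a * norm u) \<le> norm ((1 - u) powr (- complex_of_real a))"
proof -
  have "1 - u \<noteq> 0"
    using assms(2) by auto
  then have "norm ((1 - u) powr (- complex_of_real a)) = exp (- a * ln (norm (1 - u)))"
    using assms(2) by (simp add: one_minus_powr_eq_exp norm_exp_eq_Re Re_Ln)
  moreover have "a * ln (norm (1 - u)) \<le> a * norm u"
    using mult_left_mono[OF ln_norm_one_minus_le[OF assms(2)] assms(1)] .
  ultimately show ?thesis
    by simp
qed

\<comment> \<open>Modulus and argument of \<open>(1 - u)\<^sup>-\<^sup>a\<close> are \<open>|1 - u|\<^sup>-\<^sup>a \<ge> 1 - a|u|\<close> and \<open>-a \<theta>\<close> with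
  \<open>|\<theta>| \<le> \<pi>|u|\<close>; the constant 1.16 absorbs \<open>a \<pi>\<^sup>2 / 2 \<le> 0.16\<close>.\<close>
lemma Re_one_minus_powr_ge:
  assumes a: "0 < a" "a \<le> 1/32" and u: "norm (u::complex) < 1"
  shows "1 - 1.16 * a * norm u \<le> Re ((1 - u) powr (- complex_of_real a))"
proof -
  define \<theta> where "\<theta> = Im (Ln (1 - u))"
  define E where "E = exp (- a * ln (norm (1 - u)))"
  have "1 - u \<noteq> 0"
    using u by auto
  then have Re_eq: "Re ((1 - u) powr (- complex_of_real a)) = E * cos (a * \<theta>)"
    using u by (simp add: one_minus_powr_eq_exp Re_exp Re_Ln E_def \<theta>_def)
  have E: "1 - a * norm u \<le> E"
  proof -
    have "a * ln (norm (1 - u)) \<le> a * norm u"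
      using mult_left_mono[OF ln_norm_one_minus_le[OF u]] a by simp
    then have "exp (- (a * norm u)) \<le> E"
      unfolding E_def by simp
    then show ?thesis
      using exp_ge_add_one_self[of "- (a * norm u)"] by linarith
  qed
  have "\<bar>a * \<theta>\<bar> \<le> a * (pi * norm u)"
    using abs_Im_Ln_one_minus_le[OF u] a by (simp add: \<theta>_def abs_mult mult_left_mono)
  then have "(a * \<theta>)^2 \<le> (a * (pi * norm u))^2"
    using power_mono[of "\<bar>a * \<theta>\<bar>" _ 2] by simp
  also have "\<dots> = (a * (pi * pi)) * (a * (norm u * norm u))"
    by (simp add: power2_eq_square algebra_simps)
  also have "\<dots> \<le> (1/32 * 9.93) * (a * norm u)"
  proof (intro mult_mono mult_left_mono)
    show "pi * pi \<le> 9.93"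
      using mult_mono[OF pi_approx(2) pi_approx(2)] by simp
    show "norm u * norm u \<le> norm u"
      using u by (intro mult_left_le) auto
  qed (use a in auto)
  also have "\<dots> \<le> 0.32 * a * norm u"
    using a by simp
  finally have C: "1 - 0.16 * a * norm u \<le> cos (a * \<theta>)"
    using cos_ge_one_minus_square_half[of "a * \<theta>"] by simp
  have "a * norm u \<le> 1/32"
    using mult_mono[of a "1/32" "norm u" 1] a u by simp
  then have "(1 - a * norm u) * (1 - 0.16 * a * norm u) \<le> E * cos (a * \<theta>)"
    using E C by (intro mult_mono) auto
  moreover have "1 - 1.16 * a * norm u \<le> (1 - a * norm u) * (1 - 0.16 * a * norm u)"
    using a by (simp add: algebra_simps)
  ultimately show ?thesis
    unfolding Re_eq by linarith
qed

lemma norm_one_minus_powr_minus_one_le: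
  assumes a: "0 \<le> a" "a \<le> 1/2" and u: "norm (u::complex) < 1/2"
  shows "norm ((1 - u) powr (- complex_of_real a) - 1) \<le> 3 * a * norm u"
proof -
  define v where "v = - complex_of_real a * Ln (1 - u)"
  have "norm v \<le> a * (2 * norm u)"
    unfolding v_def norm_mult using norm_Ln_le[of "- u"] u a by (simp add: mult_left_mono)
  moreover have "a * (2 * norm u) \<le> 1/2"
    using mult_mono[of a "1/2" "2 * norm u" 1] a u by simp
  ultimately have "norm (exp v - 1) \<le> 3/2 * (a * (2 * norm u))"
    using norm_exp_bounds(2)[of v] by simp
  then show ?thesis
    using u by (simp add: one_minus_powr_eq_exp v_def)
qed

lemma has_integral_one_minus_monomial:
  "((\<lambda>x::real. 1 - c * x^N) has_integral (1 - c / real (Suc N))) {0..1}"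
proof -
  let ?F = "\<lambda>x::real. x - c * x^(Suc N) / real (Suc N)"
  have "((\<lambda>x. 1 - c * x^N) has_integral (?F 1 - ?F 0)) {0..1}"
  proof (rule fundamental_theorem_of_calculus)
    fix x :: real
    have "(?F has_real_derivative (1 - c * (real (Suc N) * x^N) / real (Suc N))) (at x within {0..1})"
      by (intro derivative_eq_intros) auto
    then show "(?F has_vector_derivative (1 - c * x^N)) (at x within {0..1})"
      by (simp add: has_real_derivative_iff_has_vector_derivative[symmetric] del: of_nat_Suc)
  qed simp
  then show ?thesis
    by simp
qed

\<comment> \<open>Multiplying by \<open>cnj w\<close> turns the integral along \<open>[0, w]\<close> into the real integral over
  \<open>t \<in> [0,1]\<close> of \<open>|w|\<^sup>2 Re (1 - (t w)\<^sup>N)\<^sup>-\<^sup>a \<ge> |w|\<^sup>2 (1 - 1.16 a t\<^sup>N)\<close>.\<close>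
lemma Re_contour_integral_sc_integrand_ge:
  assumes N: "N \<ge> 64" and w: "w \<in> ball 0 1"
  shows "norm w ^ 2 * (1 - 1.16 * (2 / real N) / real (Suc N))
           \<le> Re (contour_integral (linepath 0 w) (sc_integrand N) * cnj w)"
proof -
  define a where "a = 2 / real N"
  have a: "0 < a" "a \<le> 1/32"
    using N unfolding a_def by (auto simp: field_simps)
  define I where "I = contour_integral (linepath 0 w) (sc_integrand N)"
  have "((\<lambda>t. sc_integrand N (linepath 0 w t) * w) has_integral I) {0..1}"
    using has_contour_integral_sc_integrand[of N w] N w
    unfolding I_def has_contour_integral_linepath by simp
  then have Re_integral: "((\<lambda>t. Re (sc_integrand N (linepath 0 w t) * w * cnj w)) has_integral Re (I * cnj w)) {0..1}"
    by (intro has_integral_Re has_integral_mult_left)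
  have bound_integral: "((\<lambda>t. norm w ^ 2 * (1 - 1.16 * a * t^N)) has_integral
      (norm w ^ 2 * (1 - 1.16 * a / real (Suc N)))) {0..1}"
    using has_integral_mult_right[OF has_integral_one_minus_monomial[of "1.16 * a" N]] by simp
  have pointwise: "norm w ^ 2 * (1 - 1.16 * a * t^N) \<le> Re (sc_integrand N (linepath 0 w t) * w * cnj w)"
    if t: "t \<in> {0..1}" for t
  proof -
    define u where "u = (complex_of_real t * w)^N"
    have tN: "0 \<le> t^N" "t^N \<le> 1"
      using t by (auto simp: power_le_one)
    have "norm w ^ N < 1"
      using w N by (simp add: power_less_one_iff)
    then have nu: "norm u \<le> t^N" "norm u < 1"
      using tN t mult_left_le[of "norm w ^ N" "t^N"] mult_left_le_one_le[of "norm w ^ N" "t^N"]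
      by (simp_all add: u_def norm_mult norm_power power_mult_distrib)
    have "w * cnj w = complex_of_real (norm w ^ 2)"
      using complex_norm_square[of w] by simp
    then have "Re (sc_integrand N (linepath 0 w t) * w * cnj w) = norm w ^ 2 * Re ((1 - u) powr (- complex_of_real a))"
      by (simp add: mult.assoc sc_integrand_eq linepath_def scaleR_conv_of_real u_def a_def)
    moreover have "1 - 1.16 * a * t^N \<le> Re ((1 - u) powr (- complex_of_real a))"
    proof -
      have "1.16 * a * norm u \<le> 1.16 * a * t^N"
        using nu(1) a by (intro mult_left_mono) auto
      then show ?thesis
        using Re_one_minus_powr_ge[OF a nu(2)] by (meson diff_left_mono order.trans)
    qed
    ultimately show ?thesis
      by (simp add: mult_left_mono)
  qed
  have "norm w ^ 2 * (1 - 1.16 * a / real (Suc N)) \<le> Re (I * cnj w)"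
    by (rule has_integral_le[OF bound_integral Re_integral pointwise])
  then show ?thesis
    unfolding I_def a_def .
qed

lemma norm_fN_ge:
  assumes N: "N \<ge> 64" and w: "w \<in> ball 0 1"
  shows "0.99874 * norm w \<le> norm (fN N w)"
proof -
  define I where "I = contour_integral (linepath 0 w) (sc_integrand N)"
  have "2 / real N \<le> 1/32" "1 / real (Suc N) \<le> 1/65"
    using N by (auto simp: field_simps)
  then have "(2 / real N) * (1 / real (Suc N)) \<le> 1/32 * (1/65)"
    by (intro mult_mono) auto
  then have "norm w ^ 2 * 0.999442 \<le> norm w ^ 2 * (1 - 1.16 * (2 / real N) / real (Suc N))"
    by (intro mult_left_mono) auto
  also have "\<dots> \<le> Re (I * cnj w)"
    unfolding I_def by (rule Re_contour_integral_sc_integrand_ge[OF N w])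
  also have "\<dots> \<le> norm I * norm w"
    using complex_Re_le_cmod[of "I * cnj w"] by (simp add: norm_mult)
  finally have "norm w * 0.999442 \<le> norm I"
    by (cases "w = 0") (auto simp: power2_eq_square)
  then have "0.9993 * (norm w * 0.999442) \<le> cN N * norm I"
    using cN_ge[OF N] by (intro mult_mono) auto
  moreover have "norm (fN N w) = cN N * norm I"
    using cN_ge[OF N] by (simp add: fN_eq I_def norm_mult)
  moreover have "0.99874 * norm w \<le> 0.9993 * (norm w * 0.999442)"
    by simp
  ultimately show ?thesis
    by linarith
qed

lemma norm_contour_integral_sc_integrand_minus_le:
  assumes N: "N \<ge> 64" and w: "norm w \<le> 0.96"
  shows "norm (contour_integral (linepath 0 w) (sc_integrand N) - w) \<le> 0.0075 * norm w"
proof -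
  have "((\<lambda>u. sc_integrand N u - 1) has_contour_integral
      (contour_integral (linepath 0 w) (sc_integrand N) - 1 * (w - 0))) (linepath 0 w)"
    using N w by (intro has_contour_integral_diff has_contour_integral_sc_integrand has_contour_integral_const_linepath) auto
  then have "norm (contour_integral (linepath 0 w) (sc_integrand N) - 1 * (w - 0)) \<le> 0.0075 * norm (w - 0)"
  proof (rule has_contour_integral_bound_linepath)
    fix u
    assume "u \<in> closed_segment 0 w"
    then have "norm u \<le> 0.96"
      using segment_bound(1)[of u 0 w] w by simp
    then have "norm (u^N) \<le> 0.96^N"
      by (simp add: norm_power power_mono)
    also have "\<dots> \<le> 0.96^64"
      using N by (intro power_decreasing) auto
    also have "\<dots> \<le> 0.08"
      by (simp add: power_divide)
    finally have uN: "norm (u^N) \<le> 0.08" .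
    have a: "0 \<le> 2 / real N" "2 / real N \<le> 1/32"
      using N by (auto simp: field_simps)
    have "norm (sc_integrand N u - 1) \<le> 3 * (2 / real N) * norm (u^N)"
      unfolding sc_integrand_eq using a uN by (intro norm_one_minus_powr_minus_one_le) auto
    also have "\<dots> \<le> 3 * (1/32) * 0.08"
      using a uN by (intro mult_mono) auto
    finally show "norm (sc_integrand N u - 1) \<le> 0.0075"
      by simp
  qed simp
  then show ?thesis
    by simp
qed

\<comment> \<open>For \<open>|x| < 0.95\<close> the map \<open>w \<mapsto> w - (f\<^sub>N(w) - x)/c\<^sub>N\<close> sends the disk of radius 0.96
  into itself, so Brouwer's theorem yields a preimage of \<open>x\<close>.\<close>
lemma ball_subset_image_fN:
  assumes N: "N \<ge> 64"
  shows "ball 0 0.95 \<subseteq> fN N ` ball 0 1"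
proof
  fix x :: complex
  assume "x \<in> ball 0 0.95"
  then have x: "norm x < 0.95"
    by simp
  define c where "c = complex_of_real (cN N)"
  have cN: "0.9993 \<le> cN N"
    by (rule cN_ge[OF N])
  then have c: "c \<noteq> 0"
    unfolding c_def by auto
  define g where "g w = w - (fN N w - x) / c" for w
  have "cball 0 0.96 \<subseteq> ball (0::complex) 1"
    by auto
  then have "continuous_on (cball 0 0.96) (fN N)"
    using continuous_on_subset[OF continuous_on_fN] N by auto
  then have cont: "continuous_on (cball 0 0.96) g"
    unfolding g_def using c by (intro continuous_intros) auto
  have maps: "g \<in> cball 0 0.96 \<rightarrow> cball 0 0.96"
  proof
    fix w :: complex
    assume "w \<in> cball 0 0.96"
    then have w: "norm w \<le> 0.96"
      by simp
    have "g w = x / c - (contour_integral (linepath 0 w) (sc_integrand N) - w)"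
      unfolding g_def fN_eq c_def[symmetric] using c by (simp add: field_simps)
    then have "norm (g w) \<le> norm (x / c) + norm (contour_integral (linepath 0 w) (sc_integrand N) - w)"
      by (simp add: norm_triangle_ineq4)
    also have "\<dots> \<le> norm x / cN N + 0.0075 * norm w"
      using norm_contour_integral_sc_integrand_minus_le[OF N w] cN by (simp add: c_def norm_divide)
    also have "\<dots> \<le> 0.95 / 0.9993 + 0.0075 * 0.96"
      using x w cN by (intro add_mono frac_le) auto
    finally show "g w \<in> cball 0 0.96"
      by simp
  qed
  obtain w where w: "w \<in> cball 0 0.96" "g w = w"
    by (rule brouwer_ball[OF _ cont maps]) auto
  then have "fN N w = x"
    unfolding g_def using c by simp
  then show "x \<in> fN N ` ball 0 1"
    using w by force
qed

lemma
  assumes "N \<ge> 64" and "norm x < 0.95"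
  shows fN_inv_in_ball: "fN_inv N x \<in> ball 0 1"
    and fN_fN_inv: "fN N (fN_inv N x) = x"
proof -
  have "x \<in> fN N ` ball 0 1"
    using ball_subset_image_fN[OF assms(1)] assms(2) by auto
  then show "fN_inv N x \<in> ball 0 1" and "fN N (fN_inv N x) = x"
    unfolding fN_inv_def by (rule inv_into_into, rule f_inv_into_f)
qed

lemma norm_fN_inv_le:
  assumes "N \<ge> 64" and "norm x < 0.95"
  shows "0.99874 * norm (fN_inv N x) \<le> norm x"
  using norm_fN_ge[OF assms(1) fN_inv_in_ball[OF assms]] fN_fN_inv[OF assms] by simp

section \<open>Multiple polylogarithms near 0\<close>

fun nested_harmonic :: "nat list \<Rightarrow> nat \<Rightarrow> real" where
  "nested_harmonic [] n = 1"
| "nested_harmonic (m # ms) n = (\<Sum>j\<in>{1..<n}. nested_harmonic ms j / real j ^ m)"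

lemma Hs_eq_nested_harmonic: "Hs ms n = complex_of_real (nested_harmonic ms n)"
  by (induction ms arbitrary: n) auto

lemma nested_harmonic_nonneg: "0 \<le> nested_harmonic ms n"
  by (induction ms arbitrary: n) (auto intro!: sum_nonneg)

lemma nested_harmonic_Cons_Suc:
  "nested_harmonic (m # ms) (Suc n) = nested_harmonic (m # ms) n + (if n = 0 then 0 else nested_harmonic ms n / real n ^ m)"
proof (cases "n = 0")
  case False
  then have "{1..<Suc n} = insert n {1..<n}"
    by auto
  then show ?thesis
    using False by simp
qed simp

lemma nested_harmonic_div_power_le:
  "j \<ge> 1 \<Longrightarrow> nested_harmonic ms j / real j ^ m \<le> nested_harmonic ms j"
  using divide_left_mono[OF one_le_power[of "real j" m] nested_harmonic_nonneg[of ms j]] by simp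

lemma nested_harmonic_le_power: "nested_harmonic ms n \<le> real n ^ length ms"
proof (induction ms arbitrary: n)
  case (Cons m ms)
  have bound: "nested_harmonic ms j / real j ^ m \<le> real n ^ length ms" if "j \<in> {1..<n}" for j
  proof -
    have "nested_harmonic ms j / real j ^ m \<le> nested_harmonic ms j"
      using that by (intro nested_harmonic_div_power_le) simp
    also have "\<dots> \<le> real j ^ length ms"
      by (rule Cons.IH)
    also have "\<dots> \<le> real n ^ length ms"
      using that by (intro power_mono) auto
    finally show ?thesis .
  qed
  have "nested_harmonic (m # ms) n \<le> (\<Sum>j\<in>{1..<n}. real n ^ length ms)"
    unfolding nested_harmonic.simps by (rule sum_mono) (rule bound)
  also have "\<dots> = real (n - 1) * real n ^ length ms"
    by simp
  also have "\<dots> \<le> real n ^ length (m # ms)"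
    by (simp add: mult_right_mono)
  finally show ?case .
qed simp

lemma cube_le_three_power: "n ^ 3 \<le> (3::nat) ^ n"
proof (induction n)
  case (Suc n)
  show ?case
  proof (cases "n \<le> 2")
    case True
    then show ?thesis
      by (auto simp: le_Suc_eq numeral_2_eq_2 numeral_3_eq_3)
  next
    case False
    then have "(3 * Suc n) ^ 3 \<le> (4 * n) ^ 3"
      by (intro power_mono) auto
    then have "27 * Suc n ^ 3 \<le> 64 * n ^ 3"
      unfolding power_mult_distrib by simp
    then have "Suc n ^ 3 \<le> 3 * n ^ 3"
      by linarith
    then show ?thesis
      using Suc.IH by simp
  qed
qed simp

lemma nested_harmonic_le_three_power:
  assumes "length ms \<le> 3" and "n \<ge> 1"
  shows "nested_harmonic ms n \<le> 3 ^ n"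
proof -
  have "nested_harmonic ms n \<le> real n ^ 3"
    using nested_harmonic_le_power[of ms n] power_increasing[OF assms(1), of "real n"] assms(2) by simp
  also have "\<dots> \<le> 3 ^ n"
    using cube_le_three_power[of n] by (metis of_nat_le_iff of_nat_numeral of_nat_power)
  finally show ?thesis .
qed

definition polylog_term :: "nat list \<Rightarrow> nat \<Rightarrow> complex \<Rightarrow> nat \<Rightarrow> complex" where
  "polylog_term rs m z n = (if n = 0 then 0 else Hs rs n * z^n / of_nat n ^ m)"

lemma mpolylog_eq_suminf: "rev ms = m # rs \<Longrightarrow> mpolylog ms z = (\<Sum>n. polylog_term rs m z n)"
  by (simp add: mpolylog_def polylog_term_def)

lemma norm_polylog_term:
  "n > 0 \<Longrightarrow> norm (polylog_term rs m z n) = nested_harmonic rs n / real n ^ m * norm z ^ n"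
  by (simp add: polylog_term_def Hs_eq_nested_harmonic norm_mult norm_divide norm_power nested_harmonic_nonneg)

lemma norm_polylog_term_le:
  assumes "length rs \<le> 3"
  shows "norm (polylog_term rs m z n) \<le> (3 * norm z) ^ n"
proof (cases "n = 0")
  case False
  have "nested_harmonic rs n / real n ^ m \<le> 3 ^ n"
    using False nested_harmonic_div_power_le[of n rs m] nested_harmonic_le_three_power[OF assms, of n] by simp
  then have "nested_harmonic rs n / real n ^ m * norm z ^ n \<le> 3 ^ n * norm z ^ n"
    by (rule mult_right_mono) simp
  then show ?thesis
    using False by (simp add: norm_polylog_term power_mult_distrib)
qed (simp add: polylog_term_def)

lemma norm_mpolylog_minus_head_le:
  assumes ms: "rev ms = m # rs" and "length rs \<le> 3" and q: "3 * norm z < 1"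
  shows "norm (mpolylog ms z - (\<Sum>n<5. polylog_term rs m z n)) \<le> (3 * norm z) ^ 5 / (1 - 3 * norm z)"
proof -
  let ?t = "polylog_term rs m z" and ?q = "3 * norm z"
  have geom: "(\<lambda>n. ?q ^ (n + 5)) sums (?q ^ 5 / (1 - ?q))"
    using sums_mult[OF geometric_sums[of ?q], of "?q ^ 5"] q by (simp add: power_add mult.commute)
  have summable: "summable (\<lambda>n. norm (?t (n + 5)))"
    using norm_polylog_term_le[OF assms(2)] by (intro summable_comparison_test'[OF sums_summable[OF geom]]) auto
  then have "summable ?t"
    using summable_iff_shift[of "\<lambda>n. norm (?t n)" 5] summable_norm_cancel by blast
  then have split: "(\<Sum>n. ?t n) = (\<Sum>n. ?t (n + 5)) + (\<Sum>n<5. ?t n)"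
    by (rule suminf_split_initial_segment)
  have "mpolylog ms z - (\<Sum>n<5. ?t n) = (\<Sum>n. ?t (n + 5))"
    unfolding mpolylog_eq_suminf[OF ms] split by simp
  also have "norm \<dots> \<le> (\<Sum>n. norm (?t (n + 5)))"
    by (rule summable_norm[OF summable])
  also have "\<dots> \<le> (\<Sum>n. ?q ^ (n + 5))"
    by (rule suminf_le[OF norm_polylog_term_le[OF assms(2)] summable sums_summable[OF geom]])
  also have "\<dots> = ?q ^ 5 / (1 - ?q)"
    by (rule sums_unique[OF geom, symmetric])
  finally show ?thesis .
qed

lemma norm_polylog_term_le_power:
  assumes "0 < n" and "norm z \<le> s"
  shows "norm (polylog_term rs m z n) \<le> norm z * (nested_harmonic rs n / real n ^ m * s ^ (n - 1))"
proof -
  have "norm z ^ n = norm z * norm z ^ (n - 1)"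
    using assms(1) by (simp add: power_eq_if)
  also have "\<dots> \<le> norm z * s ^ (n - 1)"
    using assms(2) by (intro mult_left_mono power_mono) auto
  finally have "nested_harmonic rs n / real n ^ m * norm z ^ n
      \<le> nested_harmonic rs n / real n ^ m * (norm z * s ^ (n - 1))"
    by (rule mult_left_mono) (simp add: nested_harmonic_nonneg)
  then show ?thesis
    using assms(1) by (simp add: norm_polylog_term algebra_simps)
qed

lemma geometric_tail_le:
  assumes "norm (z::complex) \<le> s" and "s < 1/3"
  shows "(3 * norm z) ^ 5 / (1 - 3 * norm z) \<le> norm z * (243 * s^4 / (1 - 3 * s))"
proof -
  have "(3 * norm z) ^ 5 = norm z * (243 * norm z ^ 4)"
    by (simp add: power_mult_distrib eval_nat_numeral)
  also have "\<dots> \<le> norm z * (243 * s ^ 4)"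
    using assms by (intro mult_left_mono power_mono) auto
  finally have "(3 * norm z) ^ 5 / (1 - 3 * norm z) \<le> norm z * (243 * s ^ 4) / (1 - 3 * norm z)"
    using assms by (intro divide_right_mono) auto
  also have "\<dots> \<le> norm z * (243 * s ^ 4) / (1 - 3 * s)"
    using assms by (intro divide_left_mono mult_pos_pos) auto
  finally show ?thesis
    by simp
qed

\<comment> \<open>Terms beyond the fourth are dominated by the geometric series of ratio \<open>3|z|\<close>.\<close>
lemma norm_mpolylog_minus_linear_le:
  assumes ms: "rev ms = m # rs" and len: "length rs \<le> 3" and z: "norm z \<le> s" and s: "s < 1/3"
  shows "norm (mpolylog ms z - complex_of_real c * z) \<le> norm z *
    (\<bar>nested_harmonic rs 1 - c\<bar> + nested_harmonic rs 2 / 2 ^ m * s + nested_harmonic rs 3 / 3 ^ m * s^2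
      + nested_harmonic rs 4 / 4 ^ m * s^3 + 243 * s^4 / (1 - 3 * s))"
proof -
  let ?t = "polylog_term rs m z"
  define tail where "tail = mpolylog ms z - (\<Sum>n<5. ?t n)"
  have "?t 1 - complex_of_real c * z = complex_of_real (nested_harmonic rs 1 - c) * z"
    by (simp add: polylog_term_def Hs_eq_nested_harmonic algebra_simps)
  then have t1: "norm (?t 1 - complex_of_real c * z) = norm z * \<bar>nested_harmonic rs 1 - c\<bar>"
    by (simp only: norm_mult norm_of_real mult.commute)
  have "3 * norm z < 1"
    using z s by simp
  then have "norm tail \<le> norm z * (243 * s^4 / (1 - 3 * s))"
    unfolding tail_def by (rule order_trans[OF norm_mpolylog_minus_head_le[OF ms len] geometric_tail_le[OF z s]])
  moreover have "norm (?t 2) \<le> norm z * (nested_harmonic rs 2 / 2 ^ m * s)"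
    and "norm (?t 3) \<le> norm z * (nested_harmonic rs 3 / 3 ^ m * s^2)"
    and "norm (?t 4) \<le> norm z * (nested_harmonic rs 4 / 4 ^ m * s^3)"
    using norm_polylog_term_le_power[where n=2, OF _ z] norm_polylog_term_le_power[where n=3, OF _ z]
      norm_polylog_term_le_power[where n=4, OF _ z]
    by simp_all
  moreover have "mpolylog ms z - complex_of_real c * z = tail + (?t 1 - complex_of_real c * z) + ?t 2 + ?t 3 + ?t 4"
    by (simp add: tail_def eval_nat_numeral polylog_term_def)
  then have "norm (mpolylog ms z - complex_of_real c * z)
      \<le> norm tail + norm (?t 1 - complex_of_real c * z) + norm (?t 2) + norm (?t 3) + norm (?t 4)"
    by (simp only:) (intro norm_triangle_le add_mono order_refl)
  ultimately show ?thesis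
    unfolding t1 by (simp add: distrib_left)
qed

\<comment> \<open>The radius 0.0408 bounds \<open>|w\<^sup>N|\<close> for \<open>w = f\<^sub>N\<^sup>-\<^sup>1(x)\<close>: there \<open>|w| \<le> 0.9512\<close> and \<open>0.9512\<^sup>6\<^sup>4 < 0.0408\<close>.\<close>
lemma norm_mpolylog_minus_linear_le_small:
  assumes "rev ms = m # rs" and "length rs \<le> 3" and "norm z \<le> 0.0408"
    and "\<bar>nested_harmonic rs 1 - c\<bar> + nested_harmonic rs 2 / 2 ^ m * 0.0408
      + nested_harmonic rs 3 / 3 ^ m * 0.0408^2 + nested_harmonic rs 4 / 4 ^ m * 0.0408^3
      + 243 * 0.0408^4 / (1 - 3 * 0.0408) \<le> B"
  shows "norm (mpolylog ms z - complex_of_real c * z) \<le> norm z * B"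
proof -
  have "norm (mpolylog ms z - complex_of_real c * z) \<le> norm z *
    (\<bar>nested_harmonic rs 1 - c\<bar> + nested_harmonic rs 2 / 2 ^ m * 0.0408
      + nested_harmonic rs 3 / 3 ^ m * 0.0408^2 + nested_harmonic rs 4 / 4 ^ m * 0.0408^3
      + 243 * 0.0408^4 / (1 - 3 * 0.0408))"
    by (rule norm_mpolylog_minus_linear_le[OF assms(1-3)]) simp
  also have "\<dots> \<le> norm z * B"
    by (rule mult_left_mono[OF assms(4) norm_ge_zero])
  finally show ?thesis .
qed

lemma norm_mpolylog_le_small:
  assumes "rev ms = m # rs" and "length rs \<le> 3" and "norm z \<le> 0.0408"
    and "nested_harmonic rs 1 + nested_harmonic rs 2 / 2 ^ m * 0.0408
      + nested_harmonic rs 3 / 3 ^ m * 0.0408^2 + nested_harmonic rs 4 / 4 ^ m * 0.0408^3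
      + 243 * 0.0408^4 / (1 - 3 * 0.0408) \<le> B"
  shows "norm (mpolylog ms z) \<le> norm z * B"
  using norm_mpolylog_minus_linear_le_small[where c=0, OF assms(1-3)] assms(4)
  by (simp add: nested_harmonic_nonneg)

lemma norm_mpolylog_1_le: "norm z \<le> 0.0408 \<Longrightarrow> norm (mpolylog [1] z) \<le> norm z * 1.02175"
  by (rule norm_mpolylog_le_small[where m=1 and rs="[]"])
    (simp_all add: nested_harmonic_Cons_Suc eval_nat_numeral power_divide)

lemma norm_mpolylog_2_le: "norm z \<le> 0.0408 \<Longrightarrow> norm (mpolylog [2] z) \<le> norm z * 1.01117"
  by (rule norm_mpolylog_le_small[where m=2 and rs="[]"])
    (simp_all add: nested_harmonic_Cons_Suc eval_nat_numeral power_divide)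

lemma norm_mpolylog_3_le: "norm z \<le> 0.0408 \<Longrightarrow> norm (mpolylog [3] z) \<le> norm z * 1.00595"
  by (rule norm_mpolylog_le_small[where m=3 and rs="[]"])
    (simp_all add: nested_harmonic_Cons_Suc eval_nat_numeral power_divide)

lemma norm_mpolylog_4_le: "norm z \<le> 0.0408 \<Longrightarrow> norm (mpolylog [4] z) \<le> norm z * 1.00335"
  by (rule norm_mpolylog_le_small[where m=4 and rs="[]"])
    (simp_all add: nested_harmonic_Cons_Suc eval_nat_numeral power_divide)

lemma norm_mpolylog_1_1_le: "norm z \<le> 0.0408 \<Longrightarrow> norm (mpolylog [1,1] z) \<le> norm z * 0.02204"
  by (rule norm_mpolylog_le_small[where m=1 and rs="[1]"])
    (simp_all add: nested_harmonic_Cons_Suc eval_nat_numeral power_divide)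

lemma norm_mpolylog_1_2_le: "norm z \<le> 0.0408 \<Longrightarrow> norm (mpolylog [1,2] z) \<le> norm z * 0.01126"
  by (rule norm_mpolylog_le_small[where m=2 and rs="[1]"])
    (simp_all add: nested_harmonic_Cons_Suc eval_nat_numeral power_divide)

lemma norm_mpolylog_2_1_le: "norm z \<le> 0.0408 \<Longrightarrow> norm (mpolylog [2,1] z) \<le> norm z * 0.02189"
  by (rule norm_mpolylog_le_small[where m=1 and rs="[2]"])
    (simp_all add: nested_harmonic_Cons_Suc eval_nat_numeral power_divide)

lemma norm_mpolylog_3_1_le: "norm z \<le> 0.0408 \<Longrightarrow> norm (mpolylog [3,1] z) \<le> norm z * 0.02182"
  by (rule norm_mpolylog_le_small[where m=1 and rs="[3]"])
    (simp_all add: nested_harmonic_Cons_Suc eval_nat_numeral power_divide)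

lemma norm_mpolylog_2_2_le: "norm z \<le> 0.0408 \<Longrightarrow> norm (mpolylog [2,2] z) \<le> norm z * 0.01121"
  by (rule norm_mpolylog_le_small[where m=2 and rs="[2]"])
    (simp_all add: nested_harmonic_Cons_Suc eval_nat_numeral power_divide)

lemma norm_mpolylog_1_3_le: "norm z \<le> 0.0408 \<Longrightarrow> norm (mpolylog [1,3] z) \<le> norm z * 0.00597"
  by (rule norm_mpolylog_le_small[where m=3 and rs="[1]"])
    (simp_all add: nested_harmonic_Cons_Suc eval_nat_numeral power_divide)

lemma norm_mpolylog_1_1_1_le: "norm z \<le> 0.0408 \<Longrightarrow> norm (mpolylog [1,1,1] z) \<le> norm z * 0.00107"
  by (rule norm_mpolylog_le_small[where m=1 and rs="[1,1]"])
    (simp_all add: nested_harmonic_Cons_Suc eval_nat_numeral power_divide)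

lemma norm_mpolylog_2_1_1_le: "norm z \<le> 0.0408 \<Longrightarrow> norm (mpolylog [2,1,1] z) \<le> norm z * 0.00107"
  by (rule norm_mpolylog_le_small[where m=1 and rs="[1,2]"])
    (simp_all add: nested_harmonic_Cons_Suc eval_nat_numeral power_divide)

lemma norm_mpolylog_1_2_1_le: "norm z \<le> 0.0408 \<Longrightarrow> norm (mpolylog [1,2,1] z) \<le> norm z * 0.00092"
  by (rule norm_mpolylog_le_small[where m=1 and rs="[2,1]"])
    (simp_all add: nested_harmonic_Cons_Suc eval_nat_numeral power_divide)

lemma norm_mpolylog_1_1_2_le: "norm z \<le> 0.0408 \<Longrightarrow> norm (mpolylog [1,1,2] z) \<le> norm z * 0.00087"
  by (rule norm_mpolylog_le_small[where m=2 and rs="[1,1]"])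
    (simp_all add: nested_harmonic_Cons_Suc eval_nat_numeral power_divide)

lemma norm_mpolylog_1_1_1_1_le: "norm z \<le> 0.0408 \<Longrightarrow> norm (mpolylog [1,1,1,1] z) \<le> norm z * 0.00078"
  by (rule norm_mpolylog_le_small[where m=1 and rs="[1,1,1]"])
    (simp_all add: nested_harmonic_Cons_Suc eval_nat_numeral power_divide)

lemma norm_mpolylog_1_minus_id_le: "norm z \<le> 0.0408 \<Longrightarrow> norm (mpolylog [1] z - z) \<le> norm z * 0.02174"
  using norm_mpolylog_minus_linear_le_small[where ms="[1]" and m=1 and rs="[]" and c=1 and B="0.02174"]
  by (simp add: power_divide)

lemma norm_mpolylog_4_minus_id_le: "norm z \<le> 0.0408 \<Longrightarrow> norm (mpolylog [4] z - z) \<le> norm z * 0.00334"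
  using norm_mpolylog_minus_linear_le_small[where ms="[4]" and m=4 and rs="[]" and c=1 and B="0.00334"]
  by (simp add: power_divide)

section \<open>The functions \<open>V\<^sub>l\<close>\<close>

lemma norm_of_real_mult_le:
  assumes "\<bar>c\<bar> \<le> M" and "norm X \<le> norm z * B"
  shows "norm (complex_of_real c * X) \<le> norm z * (M * B)"
proof -
  have "norm (complex_of_real c * X) \<le> M * (norm z * B)"
    unfolding norm_mult norm_of_real using assms by (intro mult_mono) auto
  then show ?thesis
    by (simp add: ac_simps)
qed

lemma lam_power_bounds:
  "4.4944^2 \<le> lam^2" "lam^2 \<le> 5.8081^2" "lam^3 \<le> 5.8081^3"
  "2.1919^2 \<le> (8 - lam)^2" "(8 - lam)^2 \<le> 3.5056^2"
  using lam_bounds by (auto intro!: power_mono)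

lemma abs_numeral_le: "\<bar>numeral n :: real\<bar> \<le> numeral n"
  by simp

lemma norm_V1_le:
  assumes z: "norm z \<le> 0.0408"
  shows "norm (V 1 z) \<le> norm z * 2.0435"
proof -
  have V_eq: "V 1 z = complex_of_real 2 * mpolylog [1] z"
    by (simp add: V_def)
  have "norm (V 1 z) \<le> norm z * (2 * 1.02175)"
    unfolding V_eq by (rule norm_of_real_mult_le[OF abs_numeral_le norm_mpolylog_1_le[OF z]])
  also have "\<dots> \<le> norm z * 2.0435"
    by (rule mult_left_mono) simp_all
  finally show ?thesis .
qed

lemma V2_coefficient_bound: "\<bar>lam/2 - 2\<bar> \<le> 0.90405"
  using lam_bounds by (simp add: abs_le_iff)

lemma norm_V2_le:
  assumes z: "norm z \<le> 0.0408"
  shows "norm (V 2 z) \<le> norm z * 1.0024"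
proof -
  have V_eq: "V 2 z = complex_of_real (lam/2 - 2) * mpolylog [2] z + complex_of_real 4 * mpolylog [1,1] z"
    by (simp add: V_def Let_def)
  have "norm (V 2 z) \<le> norm z * (0.90405 * 1.01117) + norm z * (4 * 0.02204)"
    unfolding V_eq by (rule norm_triangle_mono[OF norm_of_real_mult_le[OF V2_coefficient_bound norm_mpolylog_2_le[OF z]]
          norm_of_real_mult_le[OF abs_numeral_le norm_mpolylog_1_1_le[OF z]]])
  also have "\<dots> \<le> norm z * 1.0024"
    unfolding distrib_left[symmetric] by (rule mult_left_mono) simp_all
  finally show ?thesis .
qed

lemma V3_coefficient_bounds:
  "\<bar>lam^2/16 - lam + 2\<bar> \<le> 1.7" "\<bar>3*lam - 12\<bar> \<le> 5.4243" "\<bar>lam - 4\<bar> \<le> 1.8081"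
proof -
  have "lam^2/16 - lam + 2 = (8 - lam)^2 / 16 - 2"
    by (simp add: power2_eq_square field_simps)
  then show "\<bar>lam^2/16 - lam + 2\<bar> \<le> 1.7"
    using lam_power_bounds(4,5) by (simp add: abs_le_iff power_divide)
  show "\<bar>3*lam - 12\<bar> \<le> 5.4243" "\<bar>lam - 4\<bar> \<le> 1.8081"
    using lam_bounds by (simp_all add: abs_le_iff)
qed

lemma norm_V3_le:
  assumes z: "norm z \<le> 0.0408"
  shows "norm (V 3 z) \<le> norm z * 1.8194"
proof -
  have V_eq: "V 3 z = complex_of_real (lam^2/16 - lam + 2) * mpolylog [3] z
      + complex_of_real (3*lam - 12) * mpolylog [1,2] z
      + complex_of_real (lam - 4) * mpolylog [2,1] z + complex_of_real 8 * mpolylog [1,1,1] z"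
    by (simp add: V_def Let_def)
  have "norm (V 3 z) \<le> norm z * (1.7 * 1.00595) + norm z * (5.4243 * 0.01126)
      + norm z * (1.8081 * 0.02189) + norm z * (8 * 0.00107)"
    unfolding V_eq by (rule norm_triangle_mono[OF norm_triangle_mono[OF norm_triangle_mono[OF
          norm_of_real_mult_le[OF V3_coefficient_bounds(1) norm_mpolylog_3_le[OF z]]
          norm_of_real_mult_le[OF V3_coefficient_bounds(2) norm_mpolylog_1_2_le[OF z]]]
          norm_of_real_mult_le[OF V3_coefficient_bounds(3) norm_mpolylog_2_1_le[OF z]]]
          norm_of_real_mult_le[OF abs_numeral_le norm_mpolylog_1_1_1_le[OF z]]])
  also have "\<dots> \<le> norm z * 1.8194"
    unfolding distrib_left[symmetric] by (rule mult_left_mono) simp_all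
  finally show ?thesis .
qed

lemma V4_coefficient_bounds:
  "\<bar>lam^3/192 - lam^2/8 - lam/2 - 2 + 2*lam*zeta3\<bar> \<le> 13.42" "\<bar>2*lam*zeta3\<bar> \<le> 19.17"
  "\<bar>lam^2/8 - 2*lam + 4\<bar> \<le> 4" "\<bar>lam^2/4 - 4*lam + 12\<bar> \<le> 4" "\<bar>5*lam^2/8 - 8*lam + 28\<bar> \<le> 13.13"
  "\<bar>2*lam - 8\<bar> \<le> 3.6162" "\<bar>6*lam - 24\<bar> \<le> 10.8486" "\<bar>14*lam - 56\<bar> \<le> 25.3134"
proof -
  define P2 P3 W where "P2 = lam^2" and "P3 = lam^3" and "W = lam * zeta3"
  have "lam^3/192 - lam^2/8 - lam/2 - 2 + 2*lam*zeta3 = P3/192 - P2/8 - lam/2 - 2 + 2*W"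
    and "2*lam*zeta3 = 2*W"
    by (simp_all add: P2_def P3_def W_def)
  moreover have "0 \<le> W" "W \<le> 5.8081 * 1.65"
    unfolding W_def using lam_bounds zeta3_bounds by (simp, intro mult_mono) auto
  moreover have "0 \<le> P3" "P3 \<le> 5.8081^3" "4.4944^2 \<le> P2" "P2 \<le> 5.8081^2"
    unfolding P2_def P3_def using lam_bounds lam_power_bounds by simp_all
  ultimately show "\<bar>lam^3/192 - lam^2/8 - lam/2 - 2 + 2*lam*zeta3\<bar> \<le> 13.42" "\<bar>2*lam*zeta3\<bar> \<le> 19.17"
    using lam_bounds unfolding abs_le_iff by (simp_all add: power_divide)
  have "lam^2/8 - 2*lam + 4 = (8 - lam)^2 / 8 - 4" "lam^2/4 - 4*lam + 12 = (8 - lam)^2 / 4 - 4"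
    by (simp_all add: power2_eq_square field_simps)
  then show "\<bar>lam^2/8 - 2*lam + 4\<bar> \<le> 4" "\<bar>lam^2/4 - 4*lam + 12\<bar> \<le> 4"
    using lam_power_bounds(4,5) by (simp_all add: abs_le_iff power_divide)
  show "\<bar>5*lam^2/8 - 8*lam + 28\<bar> \<le> 13.13"
    using lam_bounds lam_power_bounds(1,2) unfolding abs_le_iff by (simp add: power_divide)
  show "\<bar>2*lam - 8\<bar> \<le> 3.6162" "\<bar>6*lam - 24\<bar> \<le> 10.8486" "\<bar>14*lam - 56\<bar> \<le> 25.3134"
    using lam_bounds by (simp_all add: abs_le_iff)
qed

\<comment> \<open>\<open>Li\<^sub>1\<close> and \<open>Li\<^sub>4\<close> agree to first order, so the large coefficient \<open>2 \<lambda> \<zeta>(3)\<close> of \<open>Li\<^sub>1\<close>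
  is moved onto \<open>Li\<^sub>4\<close>, where it partly cancels, at the cost of a small multiple of \<open>Li\<^sub>1 - Li\<^sub>4\<close>.\<close>
lemma norm_V4_le:
  assumes z: "norm z \<le> 0.0408"
  shows "norm (V 4 z) \<le> norm z * 14.21"
proof -
  have Li_1_minus_Li_4: "norm (mpolylog [1] z - mpolylog [4] z) \<le> norm z * 0.02508"
    using norm_triangle_ineq4[of "mpolylog [1] z - z" "mpolylog [4] z - z"]
      norm_mpolylog_1_minus_id_le[OF z] norm_mpolylog_4_minus_id_le[OF z] by simp
  have V_eq: "V 4 z = complex_of_real (lam^3/192 - lam^2/8 - lam/2 - 2 + 2*lam*zeta3) * mpolylog [4] z
      + complex_of_real (2*lam*zeta3) * (mpolylog [1] z - mpolylog [4] z)
      + complex_of_real (lam^2/8 - 2*lam + 4) * mpolylog [3,1] z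
      + complex_of_real (lam^2/4 - 4*lam + 12) * mpolylog [2,2] z
      + complex_of_real (5*lam^2/8 - 8*lam + 28) * mpolylog [1,3] z
      + complex_of_real (2*lam - 8) * mpolylog [2,1,1] z
      + complex_of_real (6*lam - 24) * mpolylog [1,2,1] z
      + complex_of_real (14*lam - 56) * mpolylog [1,1,2] z
      + complex_of_real 16 * mpolylog [1,1,1,1] z"
    by (simp add: V_def Let_def algebra_simps)
  have "norm (V 4 z) \<le> norm z * (13.42 * 1.00335) + norm z * (19.17 * 0.02508)
      + norm z * (4 * 0.02182) + norm z * (4 * 0.01121) + norm z * (13.13 * 0.00597)
      + norm z * (3.6162 * 0.00107) + norm z * (10.8486 * 0.00092) + norm z * (25.3134 * 0.00087)
      + norm z * (16 * 0.00078)"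
    unfolding V_eq by (rule norm_triangle_mono[OF norm_triangle_mono[OF norm_triangle_mono[OF norm_triangle_mono[OF
          norm_triangle_mono[OF norm_triangle_mono[OF norm_triangle_mono[OF norm_triangle_mono[OF
          norm_of_real_mult_le[OF V4_coefficient_bounds(1) norm_mpolylog_4_le[OF z]]
          norm_of_real_mult_le[OF V4_coefficient_bounds(2) Li_1_minus_Li_4]]
          norm_of_real_mult_le[OF V4_coefficient_bounds(3) norm_mpolylog_3_1_le[OF z]]]
          norm_of_real_mult_le[OF V4_coefficient_bounds(4) norm_mpolylog_2_2_le[OF z]]]
          norm_of_real_mult_le[OF V4_coefficient_bounds(5) norm_mpolylog_1_3_le[OF z]]]
          norm_of_real_mult_le[OF V4_coefficient_bounds(6) norm_mpolylog_2_1_1_le[OF z]]]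
          norm_of_real_mult_le[OF V4_coefficient_bounds(7) norm_mpolylog_1_2_1_le[OF z]]]
          norm_of_real_mult_le[OF V4_coefficient_bounds(8) norm_mpolylog_1_1_2_le[OF z]]]
          norm_of_real_mult_le[OF abs_numeral_le norm_mpolylog_1_1_1_1_le[OF z]]])
  also have "\<dots> \<le> norm z * 14.21"
    unfolding distrib_left[symmetric] by (rule mult_left_mono) simp_all
  finally show ?thesis .
qed

definition V_slope :: "nat \<Rightarrow> real" where
  "V_slope l = (if l = 1 then 2.0435 else if l = 2 then 1.0024 else if l = 3 then 1.8194 else 14.21)"

lemma V_slope_nonneg: "0 \<le> V_slope l"
  by (simp add: V_slope_def)

lemma norm_V_le:
  assumes "l \<in> {1,2,3,4}" and "norm z \<le> 0.0408"
  shows "norm (V l z) \<le> norm z * V_slope l"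
  using assms norm_V1_le norm_V2_le norm_V3_le norm_V4_le by (auto simp: V_slope_def)

section \<open>The quotient\<close>

lemma norm_sc_integrand_ge:
  assumes "N \<ge> 64" and "norm (w^N) \<le> 0.0408"
  shows "1 \<le> 1.00255 * norm (sc_integrand N w)"
proof -
  define y where "y = 2 / real N * norm (w^N)"
  have y: "0 \<le> y" "y \<le> 1/32 * 0.0408"
    unfolding y_def using assms by (auto intro!: mult_mono simp: field_simps)
  have "exp y \<le> 1 + 2 * y"
    using y by (intro real_exp_bound_lemma) auto
  also have "\<dots> \<le> 1.00255"
    using y by simp
  finally have "exp y \<le> 1.00255" .
  moreover have "exp (- (2 / real N) * norm (w^N)) \<le> norm (sc_integrand N w)"
    unfolding sc_integrand_eq using assms by (intro norm_one_minus_powr_ge) auto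
  then have "exp (- y) \<le> norm (sc_integrand N w)"
    by (simp add: y_def)
  ultimately show ?thesis
    using mult_mono[of "exp y" "1.00255" "exp (- y)" "norm (sc_integrand N w)"]
    by (simp add: exp_minus)
qed

lemma Qt_eq:
  assumes N: "N \<ge> 64" and x: "norm x < 0.95"
  shows "Qt N l x = V l (fN_inv N x ^ N) / (sc_integrand N (fN_inv N x) * fN_inv N x)"
  using cN_squared(2)[of N] N
  by (simp add: Qt_def Let_def deriv_fN[OF _ fN_inv_in_ball[OF N x]])

lemma norm_Qt_le:
  assumes N: "N \<ge> 64" and l: "l \<in> {1,2,3,4}" and x: "norm x < 0.95" "x \<noteq> 0"
  shows "norm (Qt N l x) \<le> V_slope l * 1.00255 * norm (fN_inv N x) ^ (N - 1)"
proof -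
  define w where "w = fN_inv N x"
  define r where "r = norm w"
  have "w \<noteq> 0"
    using fN_fN_inv[OF N x(1)] x(2) unfolding w_def by auto
  then have r: "0 < r" "r \<le> 0.9512"
    using norm_fN_inv_le[OF N x(1)] x(1) unfolding r_def w_def by auto
  have "r ^ N \<le> 0.9512 ^ 64"
    using r N by (intro order_trans[OF power_decreasing power_mono]) auto
  then have rN: "norm (w ^ N) \<le> 0.0408"
    unfolding r_def norm_power by (simp add: power_divide)
  have V: "norm (V l (w ^ N)) \<le> r ^ N * V_slope l"
    using norm_V_le[OF l rN] by (simp add: r_def norm_power)
  have G: "1 \<le> 1.00255 * norm (sc_integrand N w)"
    by (rule norm_sc_integrand_ge[OF N rN])
  have "r ^ N * V_slope l * 1 \<le> r ^ N * V_slope l * (1.00255 * norm (sc_integrand N w))"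
    using r V_slope_nonneg[of l] by (intro mult_left_mono[OF G]) simp
  then have "norm (V l (w ^ N)) \<le> r ^ N * V_slope l * (1.00255 * norm (sc_integrand N w))"
    using V by simp
  also have "\<dots> = (V_slope l * 1.00255 * r ^ (N - 1)) * (norm (sc_integrand N w) * r)"
    using N by (simp add: power_eq_if ac_simps)
  finally have "norm (V l (w ^ N)) \<le> (V_slope l * 1.00255 * r ^ (N - 1)) * (norm (sc_integrand N w) * r)" .
  moreover have "0 < norm (sc_integrand N w)"
    using G by (cases "sc_integrand N w = 0") auto
  ultimately show ?thesis
    using r unfolding Qt_eq[OF N x(1)] w_def[symmetric] r_def
    by (simp add: norm_divide norm_mult pos_divide_le_eq)
qed

lemma norm_Qt_le_CV:
  assumes N: "N \<ge> 64" and l: "l \<in> {1,2,3,4}" and x: "norm x < 0.95" "x \<noteq> 0"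
  shows "norm (Qt N l x) \<le> CV l"
proof -
  define r where "r = norm (fN_inv N x)"
  have r: "0 \<le> r" "r \<le> 0.9512"
    using norm_fN_inv_le[OF N x(1)] x(1) unfolding r_def by auto
  have "r ^ (N - 1) \<le> 0.9512 ^ 63"
    using r N by (intro order_trans[OF power_mono power_decreasing]) auto
  also have "\<dots> \<le> 0.0428"
    by (simp add: power_divide)
  finally have "V_slope l * 1.00255 * r ^ (N - 1) \<le> V_slope l * 1.00255 * 0.0428"
    by (intro mult_left_mono mult_nonneg_nonneg V_slope_nonneg) simp_all
  also have "\<dots> \<le> CV l"
    using l by (auto simp: V_slope_def CV_def)
  finally show ?thesis
    using norm_Qt_le[OF N l x] unfolding r_def by linarith
qed

lemma norm_Qt_le_linear:
  assumes N: "N \<ge> 64" and l: "l \<in> {1,2,3,4}" and x: "norm x < 0.95" "x \<noteq> 0"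
  shows "norm (Qt N l x) \<le> 15 * norm x"
proof -
  define r where "r = norm (fN_inv N x)"
  have r: "0 \<le> r" "0.99874 * r \<le> norm x"
    using norm_fN_inv_le[OF N x(1)] unfolding r_def by auto
  then have "r ^ (N - 1) \<le> r ^ 1"
    using N x(1) by (intro power_decreasing) auto
  then have "V_slope l * 1.00255 * r ^ (N - 1) \<le> V_slope l * 1.00255 * r"
    by (intro mult_left_mono mult_nonneg_nonneg V_slope_nonneg) simp_all
  also have "\<dots> \<le> 15 * (0.99874 * r)"
    using l r by (auto simp: V_slope_def)
  also have "\<dots> \<le> 15 * norm x"
    using r by simp
  finally show ?thesis
    using norm_Qt_le[OF N l x] unfolding r_def by linarith
qed

theorem lemma2p16:
  fixes N l :: nat
  assumes "N \<ge> 64" and "l \<in> {1,2,3,4}"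
  shows "(\<forall>x\<in>ball (0::complex) 0.95 - {0}. norm (Qt N l x) \<le> CV l)
       \<and> (\<exists>L. (Qt N l \<longlongrightarrow> L) (at 0) \<and> norm L \<le> CV l)"
proof
  show "\<forall>x\<in>ball (0::complex) 0.95 - {0}. norm (Qt N l x) \<le> CV l"
    using norm_Qt_le_CV[OF assms] by simp
  have "eventually (\<lambda>x. norm (Qt N l x) \<le> 15 * norm x) (at 0)"
    unfolding eventually_at using norm_Qt_le_linear[OF assms] by (intro exI[of _ "0.95"]) auto
  moreover have "((\<lambda>x. 15 * norm x) \<longlongrightarrow> 0) (at (0::complex))"
    by (auto intro!: tendsto_eq_intros)
  ultimately have "(Qt N l \<longlongrightarrow> 0) (at 0)"
    by (rule Lim_null_comparison)
  then show "\<exists>L. (Qt N l \<longlongrightarrow> L) (at 0) \<and> norm L \<le> CV l"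
    by (intro exI[of _ 0]) (simp add: CV_def)
qed

end
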